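(* Let $q>2$ be a prime power. In $\mathrm{PG}(2,q^2)$ there exists a semioval $\mathcal{S}\subset\mathcal{H}_q$ of size $k$ for every integer $k$ satisfying $q^3+1\geq k\geq\frac{q^3+2q^2-q+2}{2}$ if $q$ is odd, and $q^3+1\geq k\geq\frac{q^3+3q^2-2q+2}{2}$ if $q$ is even.
   Context: $\mathrm{PG}(2,q^2)$ is the Desarguesian projective plane over $\mathbb{F}_{q^2}$. $\mathcal{H}_q$ denotes the Hermitian curve, the set of points of $\mathrm{PG}(2,q^2)$ satisfying $X_2X_0^q+X_2^qX_0+X_1^{q+1}=0$ (it has $q^3+1$ points). A semioval is a non-empty pointset $\mathcal{S}$ such that for every $P\in\mathcal{S}$ there is a unique line $t_P$ with $\mathcal{S}\cap t_P=\{P\}$. *)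

theory Defs
  imports "HOL-Number_Theory.Number_Theory"
begin

(* Homogeneous coordinates (X0,X1,X2) over a field; PG(2,F) = nonzero vectors up to scalars. *)
type_synonym 'a vec3 = "'a \<times> 'a \<times> 'a"

definition smul3 :: "'a::field \<Rightarrow> 'a vec3 \<Rightarrow> 'a vec3" where
  "smul3 c v = (case v of (x0, x1, x2) \<Rightarrow> (c * x0, c * x1, c * x2))"

definition dot3 :: "'a::field vec3 \<Rightarrow> 'a vec3 \<Rightarrow> 'a" where
  "dot3 u v = (case u of (u0, u1, u2) \<Rightarrow> case v of (v0, v1, v2) \<Rightarrow> u0 * v0 + u1 * v1 + u2 * v2)"

definition proj_pt :: "'a::field vec3 \<Rightarrow> 'a vec3 set" where
  "proj_pt v = {smul3 c v | c. c \<noteq> 0}"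

definition pg_points :: "'a::field vec3 set set" where
  "pg_points = {proj_pt v | v. v \<noteq> (0, 0, 0)}"

definition pg_line :: "'a::field vec3 \<Rightarrow> 'a vec3 set set" where
  "pg_line u = {proj_pt v | v. v \<noteq> (0, 0, 0) \<and> dot3 u v = 0}"

definition pg_lines :: "'a::field vec3 set set set" where
  "pg_lines = {pg_line u | u. u \<noteq> (0, 0, 0)}"

definition hermitian_curve :: "nat \<Rightarrow> 'a::field vec3 set set" where
  "hermitian_curve q = {proj_pt (x0, x1, x2) | x0 x1 x2.
      (x0, x1, x2) \<noteq> (0, 0, 0) \<and> x2 * x0 ^ q + x2 ^ q * x0 + x1 ^ (q + 1) = 0}"

definition semioval :: "'a::field vec3 set set \<Rightarrow> bool" where
  "semioval S \<longleftrightarrow> S \<noteq> {} \<and> S \<subseteq> pg_points \<and>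
     (\<forall>P\<in>S. \<exists>!l. l \<in> pg_lines \<and> S \<inter> l = {P})"

end

theory Submission
  imports Defs "HOL-Computational_Algebra.Polynomial"
begin

text \<open>
  Regard \<open>x\<^sup>q\<close> as the conjugate of \<open>x\<close> in \<open>GF(q\<^sup>2)\<close> over \<open>GF(q)\<close>, with trace \<open>Tr\<close> and
  norm \<open>Nm\<close>. The points of \<open>H\<^sub>q\<close> other than \<open>(0:0:1)\<close> are the \<open>(1:x:z)\<close> with
  \<open>Tr z + Nm x = 0\<close>; above each \<open>x\<close> lie exactly \<open>q\<close> of them. A non-vertical line
  \<open>z = a + b x\<close> meets \<open>H\<^sub>q\<close> above the ``circle'' \<open>Nm (x + b\<^sup>q) = c\<close>, which is a single
  point when the line is the Hermitian tangent and has \<open>q + 1\<close> points otherwise.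

  Let \<open>D\<close> be a union of \<open>t \<le> (q - 1)/2\<close> additive cosets \<open>s e + GF(q)\<close>. On each coset the
  norm is a quadratic polynomial over \<open>GF(q)\<close>, so a circle meets \<open>D\<close> in at most
  \<open>2 t \<le> q - 1\<close> points. Delete \<open>(0:0:1)\<close> and all points of \<open>H\<^sub>q\<close> above \<open>D\<close>, then put back
  any \<open>n \<noteq> 1\<close> of them such that no column keeps exactly one point. Every secant through a
  remaining point still contains a second one, so the Hermitian tangents remain the unique
  tangents. This gives semiovals of all sizes \<open>(q\<^sup>2 - t q) q + n\<close>, \<open>n \<le> t q\<^sup>2\<close>, and
  \<open>H\<^sub>q\<close> itself has size \<open>q\<^sup>3 + 1\<close>.
\<close>

lemma card_roots_power_eq_affine:
  fixes a b :: "'a::field"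
  assumes "2 \<le> n"
  shows "card {x. x ^ n = a * x + b} \<le> n"
proof -
  let ?p = "monom 1 n + [:-b, -a:]"
  have "degree [:-b, -a:] < degree (monom (1::'a) n)"
    using assms degree_pCons_le[of "-b" "[:-a:]"] by (simp add: degree_monom_eq)
  then have deg: "degree ?p = n"
    by (simp add: degree_add_eq_left degree_monom_eq)
  with assms have "?p \<noteq> 0" by auto
  then have "card {x. poly ?p x = 0} \<le> n"
    using card_poly_roots_bound deg by fastforce
  moreover have "{x. poly ?p x = 0} = {x. x ^ n = a * x + b}"
    by (auto simp: poly_monom algebra_simps)
  ultimately show ?thesis by simp
qed

lemma power_card_UNIV_eq_self:
  fixes x :: "'a::{finite,field}"
  shows "x ^ card (UNIV :: 'a set) = x"
proof (cases "x = 0")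
  case False
  let ?U = "UNIV - {0::'a}"
  have "bij_betw ((*) x) ?U ?U"
    by (rule bij_betw_byWitness[where f' = "\<lambda>y. y / x"]) (use False in force)+
  have "x ^ card ?U * (\<Prod>y\<in>?U. y) = (\<Prod>y\<in>?U. x * y)"
    by (simp only: prod.distrib prod_constant)
  also have "\<dots> = (\<Prod>y\<in>?U. y)"
    by (rule prod.reindex_bij_betw) fact
  finally have "x ^ card ?U = 1"
    by (simp add: mult_cancel_right2)
  moreover have "card (UNIV :: 'a set) = Suc (card ?U)"
    using finite_UNIV_card_ge_0[where 'a='a] by (simp add: card_Diff_singleton)
  ultimately show ?thesis
    by (metis power_Suc2 mult_1)
next
  case True
  then show ?thesis
    using finite_UNIV_card_ge_0[where 'a='a] by simp
qed

lemma primepow_power_add: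
  fixes x y :: "'a::{finite,field}"
  assumes "primepow q" and "card (UNIV :: 'a set) = q ^ m"
  shows "(x + y) ^ q = x ^ q + y ^ q"
proof -
  obtain p e where p: "prime p" "q = p ^ e"
    using assms(1) unfolding primepow_def by blast
  have char_prime: "prime CHAR('a)"
    by (rule prime_CHAR_semidom) (rule finite_imp_CHAR_pos, simp)
  have "CHAR('a) dvd p ^ (e * m)"
    using CHAR_dvd_CARD[where 'a='a] assms(2) p(2) by (simp add: power_mult)
  then have "CHAR('a) = p"
    using char_prime p(1) by (metis prime_dvd_power primes_dvd_imp_eq)
  then show ?thesis
    using char_prime p(2) by (intro freshmans_dream') simp_all
qed

lemma card_eq_card_image_mult_fibres:
  assumes "finite A" and "\<And>c. c \<in> f ` A \<Longrightarrow> card {x\<in>A. f x = c} = m"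
  shows "card A = card (f ` A) * m"
proof -
  have "card A = card (\<Union>c\<in>f ` A. {x\<in>A. f x = c})"
    by (rule arg_cong[where f=card]) auto
  also have "\<dots> = (\<Sum>c\<in>f ` A. card {x\<in>A. f x = c})"
    by (rule card_UN_disjoint) (use assms(1) in auto)
  also have "\<dots> = card (f ` A) * m"
    using assms(2) by simp
  finally show ?thesis .
qed

lemma mult_eq_mult_le_le_imp_eq:
  fixes a b c d :: nat
  assumes "a * b = c * d" "a \<le> c" "b \<le> d" "0 < c" "0 < d"
  shows "a = c \<and> b = d"
proof -
  have "a * b \<le> a * d" "a * d \<le> c * d"
    using assms(2,3) by simp_all
  then have "a * d = c * d" "a * b = a * d"
    using assms(1) by linarith+
  then show ?thesis
    using assms(4,5) by auto
qed

lemma exists_subset_no_singleton_blocks: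
  fixes B :: "'i \<Rightarrow> 'b set"
  assumes "finite I" and card_B: "\<And>i. card (B i) = m" and "3 \<le> m"
    and disjoint_B: "\<And>i j. i \<noteq> j \<Longrightarrow> B i \<inter> B j = {}"
    and "n \<le> card I * m" and "n \<noteq> 1"
  shows "\<exists>Z \<subseteq> (\<Union>i\<in>I. B i). card Z = n \<and> (\<forall>i\<in>I. card (Z \<inter> B i) \<noteq> 1)"
  using assms(1,5,6)
proof (induction I arbitrary: n rule: finite_induct)
  case empty
  then show ?case by (intro exI[of _ "{}"]) simp
next
  case (insert j I)
  have finite_B: "finite (B i)" for i
    using card_B[of i] \<open>3 \<le> m\<close> by (metis card.infinite not_numeral_le_zero)
  have "B i \<inter> B j = {}" if "i \<in> I" for i
    using that insert.hyps(2) by (intro disjoint_B) auto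
  then have union_disjoint: "(\<Union>i\<in>I. B i) \<inter> B j = {}"
    by blast
  show ?case
  proof (cases "n \<le> card I * m")
    case True
    then obtain Z where Z: "Z \<subseteq> (\<Union>i\<in>I. B i)" "card Z = n"
        "\<forall>i\<in>I. card (Z \<inter> B i) \<noteq> 1"
      using insert.IH insert.prems(2) by blast
    have "Z \<inter> B j = {}"
      using Z(1) union_disjoint by blast
    with Z show ?thesis
      by (intro exI[of _ Z]) auto
  next
    case False
    \<comment> \<open>the new block receives the excess over \<open>card I * m\<close>, raised from 1 to 2 if necessary\<close>
    define r where "r = (if n - card I * m = 1 then 2 else n - card I * m)"
    have "card I * m = 0 \<or> 3 \<le> card I * m"
      using \<open>3 \<le> m\<close> by (cases "card I") auto
    then have r: "2 \<le> r" "r \<le> m" "n - r \<le> card I * m" "n - r \<noteq> 1" "r \<le> n"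
      using False insert.prems insert.hyps \<open>3 \<le> m\<close> unfolding r_def by auto
    obtain Z0 where Z0: "Z0 \<subseteq> (\<Union>i\<in>I. B i)" "card Z0 = n - r"
        "\<forall>i\<in>I. card (Z0 \<inter> B i) \<noteq> 1"
      using insert.IH r(3,4) by blast
    obtain W where W: "W \<subseteq> B j" "card W = r"
      using obtain_subset_with_card_n r(2) card_B by metis
    have "finite Z0"
      using Z0(1) insert.hyps(1) finite_B by (meson finite_UN_I finite_subset)
    moreover have "finite W"
      using W(1) finite_B finite_subset by blast
    moreover have "Z0 \<inter> W = {}"
      using W(1) Z0(1) union_disjoint by blast
    ultimately have "card (Z0 \<union> W) = n"
      using Z0(2) W(2) r(5) by (simp add: card_Un_disjoint)
    moreover have "card ((Z0 \<union> W) \<inter> B i) \<noteq> 1" if "i \<in> insert j I" for i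
    proof (cases "i = j")
      case True
      then have "(Z0 \<union> W) \<inter> B i = W"
        using Z0(1) W(1) union_disjoint by blast
      then show ?thesis
        using W(2) r(1) by simp
    next
      case False
      then have "(Z0 \<union> W) \<inter> B i = Z0 \<inter> B i"
        using W(1) disjoint_B[of j i] by blast
      then show ?thesis
        using Z0(3) False that by simp
    qed
    ultimately show ?thesis
      using Z0(1) W(1) by (intro exI[of _ "Z0 \<union> W"]) auto
  qed
qed

lemma smul3_one [simp]: "smul3 1 v = v"
  by (cases v) (simp add: smul3_def)

lemma dot3_smul3_left: "dot3 (smul3 c u) v = c * dot3 u v"
  by (cases u; cases v) (simp add: dot3_def smul3_def algebra_simps)

lemma dot3_smul3_right: "dot3 u (smul3 c v) = c * dot3 u v"
  by (cases u; cases v) (simp add: dot3_def smul3_def algebra_simps)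

lemma proj_pt_eqD:
  assumes "proj_pt v = proj_pt w"
  shows "\<exists>c. c \<noteq> 0 \<and> v = smul3 c w"
proof -
  have "v \<in> proj_pt v"
    unfolding proj_pt_def by (rule CollectI, rule exI[of _ 1]) simp
  then show ?thesis
    unfolding assms by (simp add: proj_pt_def conj_commute)
qed

lemma proj_pt_in_pg_line_iff:
  assumes "v \<noteq> (0, 0, 0)"
  shows "proj_pt v \<in> pg_line u \<longleftrightarrow> dot3 u v = 0"
proof
  assume "proj_pt v \<in> pg_line u"
  then obtain w where "proj_pt v = proj_pt w" "dot3 u w = 0"
    by (auto simp: pg_line_def)
  then show "dot3 u v = 0"
    using proj_pt_eqD dot3_smul3_right by (metis mult_zero_right)
qed (use assms in \<open>unfold pg_line_def, blast\<close>)

lemma pg_line_smul3: "c \<noteq> 0 \<Longrightarrow> pg_line (smul3 c u) = pg_line u"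
  by (simp add: pg_line_def dot3_smul3_left)

lemma pg_line_normalize:
  "u2 \<noteq> 0 \<Longrightarrow> pg_line (u0, u1, u2) = pg_line (u0 / u2, u1 / u2, 1)"
  using pg_line_smul3[of u2 "(u0 / u2, u1 / u2, 1)"] by (simp add: smul3_def)

lemma pg_line_in_pg_lines: "u \<noteq> (0, 0, 0) \<Longrightarrow> pg_line u \<in> pg_lines"
  unfolding pg_lines_def by blast

lemma proj_pt_in_pg_points: "v \<noteq> (0, 0, 0) \<Longrightarrow> proj_pt v \<in> pg_points"
  unfolding pg_points_def by blast

lemma unique_tangent_lineI:
  assumes "u \<noteq> (0, 0, 0)" and "S \<inter> pg_line u = {P}"
    and "\<And>v. v \<noteq> (0, 0, 0) \<Longrightarrow> S \<inter> pg_line v = {P} \<Longrightarrow> pg_line v = pg_line u"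
  shows "\<exists>!l. l \<in> pg_lines \<and> S \<inter> l = {P}"
proof (rule ex1I[of _ "pg_line u"])
  show "pg_line u \<in> pg_lines \<and> S \<inter> pg_line u = {P}"
    using assms(1,2) pg_line_in_pg_lines by blast
  fix l
  assume l: "l \<in> pg_lines \<and> S \<inter> l = {P}"
  then obtain v where "v \<noteq> (0, 0, 0)" "l = pg_line v"
    unfolding pg_lines_def by blast
  with l show "l = pg_line u"
    using assms(3) by blast
qed

definition aff_pt :: "'a::field \<Rightarrow> 'a \<Rightarrow> 'a vec3 set" where
  "aff_pt x z = proj_pt (1, x, z)"

definition pt_infty :: "'a::field vec3 set" where
  "pt_infty = proj_pt (0, 0, 1)"

lemma aff_pt_eq_iff [simp]: "aff_pt x z = aff_pt x' z' \<longleftrightarrow> x = x' \<and> z = z'"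
proof
  assume "aff_pt x z = aff_pt x' z'"
  then obtain c where "(1, x, z) = smul3 c (1, x', z')"
    using proj_pt_eqD[of "(1, x, z)" "(1, x', z')"] unfolding aff_pt_def by blast
  then show "x = x' \<and> z = z'"
    by (simp add: smul3_def)
qed simp

lemma aff_pt_neq_pt_infty [simp]: "aff_pt x z \<noteq> pt_infty"
proof
  assume "aff_pt x z = pt_infty"
  then obtain c where "(1, x, z) = smul3 c (0, 0, 1)"
    using proj_pt_eqD[of "(1, x, z)" "(0, 0, 1)"] unfolding aff_pt_def pt_infty_def by blast
  then show False
    by (simp add: smul3_def)
qed

declare aff_pt_neq_pt_infty [symmetric, simp]

lemma aff_pt_in_pg_line_iff: "aff_pt x z \<in> pg_line u \<longleftrightarrow> dot3 u (1, x, z) = 0"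
  unfolding aff_pt_def by (simp add: proj_pt_in_pg_line_iff)

lemma pt_infty_in_pg_line_iff: "pt_infty \<in> pg_line u \<longleftrightarrow> dot3 u (0, 0, 1) = 0"
  unfolding pt_infty_def by (simp add: proj_pt_in_pg_line_iff)

locale hermitian_plane =
  fixes q :: nat and conj :: "'a::{finite,field} \<Rightarrow> 'a"
  assumes card_UNIV_eq: "card (UNIV :: 'a set) = q ^ 2"
    and primepow_q: "primepow q"
    and conj_eq_power: "conj x = x ^ q"
begin

lemma two_le_q: "2 \<le> q"
proof -
  have "card {0, 1 :: 'a} \<le> card (UNIV :: 'a set)"
    by (rule card_mono) simp_all
  then have "2 \<le> q ^ 2"
    using card_UNIV_eq by simp
  moreover have "q ^ 2 \<le> 1" if "q \<le> 1"
    using power_mono[OF that, of 2] by simp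
  ultimately show ?thesis
    by linarith
qed

lemma conj_add: "conj (x + y) = conj x + conj y"
  using primepow_power_add[OF primepow_q card_UNIV_eq] by (simp add: conj_eq_power)

lemma conj_mult: "conj (x * y) = conj x * conj y"
  by (simp add: conj_eq_power power_mult_distrib)

lemma conj_0 [simp]: "conj 0 = 0"
  using two_le_q by (simp add: conj_eq_power)

lemma conj_1 [simp]: "conj 1 = 1"
  by (simp add: conj_eq_power)

lemma conj_conj [simp]: "conj (conj x) = x"
  using power_card_UNIV_eq_self[of x] card_UNIV_eq
  by (simp add: conj_eq_power power2_eq_square power_mult)

lemma conj_eq_0_iff [simp]: "conj x = 0 \<longleftrightarrow> x = 0"
  by (metis conj_0 conj_conj)

lemma conj_uminus: "conj (- x) = - conj x"
  using conj_add[of x "- x"] by (simp add: eq_neg_iff_add_eq_0 add.commute)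

lemma conj_diff: "conj (x - y) = conj x - conj y"
  using conj_add[of x "- y"] by (simp add: conj_uminus)

lemma conj_inverse: "conj (inverse x) = inverse (conj x)"
proof (cases "x = 0")
  case False
  then have "conj (inverse x) * conj x = 1"
    by (simp flip: conj_mult)
  with False show ?thesis
    by (simp add: field_simps)
qed simp

lemma conj_divide: "conj (x / y) = conj x / conj y"
  by (simp add: divide_inverse conj_mult conj_inverse)

definition Tr :: "'a \<Rightarrow> 'a" where "Tr z = z + conj z"
definition Nm :: "'a \<Rightarrow> 'a" where "Nm x = x * conj x"
definition Fq :: "'a set" where "Fq = {c. conj c = c}"
definition trace_kernel :: "'a set" where "trace_kernel = {z. conj z = - z}"
definition norm_one :: "'a set" where "norm_one = {w. Nm w = 1}"

lemma conj_Tr [simp]: "conj (Tr z) = Tr z"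
  by (simp add: Tr_def conj_add add.commute)

lemma conj_Nm [simp]: "conj (Nm x) = Nm x"
  by (simp add: Nm_def conj_mult mult.commute)

lemma Nm_eq_0_iff [simp]: "Nm x = 0 \<longleftrightarrow> x = 0"
  by (simp add: Nm_def)

lemma Nm_divide: "Nm (x / y) = Nm x / Nm y"
  by (simp add: Nm_def conj_divide)

lemma card_Fq_le: "card Fq \<le> q"
  using card_roots_power_eq_affine[of q 1 0] two_le_q by (simp add: Fq_def conj_eq_power)

lemma card_trace_kernel_le: "card trace_kernel \<le> q"
  using card_roots_power_eq_affine[of q "-1" 0] two_le_q
  by (simp add: trace_kernel_def conj_eq_power)

lemma card_norm_one_le: "card norm_one \<le> q + 1"
proof -
  have "norm_one = {w. w ^ (q + 1) = 0 * w + 1}"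
    by (simp add: norm_one_def Nm_def conj_eq_power power_Suc)
  then show ?thesis
    using card_roots_power_eq_affine[of "q + 1" 0 1] two_le_q by simp
qed

lemma Tr_fibre: "{z. Tr z = Tr z0} = (+) z0 ` trace_kernel"
proof -
  have "Tr z = Tr z0 \<longleftrightarrow> z - z0 \<in> trace_kernel" for z
    by (auto simp: Tr_def trace_kernel_def conj_diff algebra_simps)
  then show ?thesis
    by (force simp: algebra_simps)
qed

lemma Nm_fibre:
  assumes "w0 \<noteq> 0"
  shows "{w. Nm w = Nm w0} = (*) w0 ` norm_one"
proof -
  have "Nm w = Nm w0 \<longleftrightarrow> w / w0 \<in> norm_one" for w
    using assms by (simp add: norm_one_def Nm_divide)
  then show ?thesis
    using assms by (force simp: field_simps)
qed

lemma card_trace_kernel: "card trace_kernel = q"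
  and range_Tr: "range Tr = Fq"
  and card_Fq: "card Fq = q"
proof -
  have "card (UNIV :: 'a set) = card (range Tr) * card trace_kernel"
    by (rule card_eq_card_image_mult_fibres)
       (auto simp: Tr_fibre card_image inj_on_def simp del: range_eqI)
  moreover have sub: "range Tr \<subseteq> Fq"
    by (auto simp: Fq_def)
  then have "card (range Tr) \<le> q"
    using card_Fq_le card_mono[of Fq] by (meson finite le_trans)
  ultimately have "card (range Tr) = q \<and> card trace_kernel = q"
    using card_UNIV_eq card_trace_kernel_le two_le_q
    by (intro mult_eq_mult_le_le_imp_eq) (simp_all add: power2_eq_square)
  then show "card trace_kernel = q" "range Tr = Fq" "card Fq = q"
    using card_seteq[OF finite sub] card_Fq_le by simp_all
qed

lemma card_norm_one: "card norm_one = q + 1"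
proof -
  let ?U = "UNIV - {0 :: 'a}"
  have "card ?U = card (Nm ` ?U) * card norm_one"
  proof (rule card_eq_card_image_mult_fibres)
    fix c
    assume "c \<in> Nm ` ?U"
    then obtain w0 where "w0 \<noteq> 0" "c = Nm w0"
      by blast
    then have "{w \<in> ?U. Nm w = c} = {w. Nm w = Nm w0}"
      by (metis (mono_tags) DiffI Nm_eq_0_iff UNIV_I singletonD)
    also have "\<dots> = (*) w0 ` norm_one"
      using Nm_fibre \<open>w0 \<noteq> 0\<close> .
    finally have "{w \<in> ?U. Nm w = c} = (*) w0 ` norm_one" .
    then show "card {w \<in> ?U. Nm w = c} = card norm_one"
      using \<open>w0 \<noteq> 0\<close> by (simp add: card_image inj_on_def)
  qed simp
  moreover have "card ?U = (q - 1) * (q + 1)"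
    using card_UNIV_eq by (simp add: card_Diff_singleton power2_eq_square algebra_simps)
  moreover have "Nm ` ?U \<subseteq> Fq - {0}"
    by (auto simp: Fq_def)
  then have "card (Nm ` ?U) \<le> q - 1"
    using card_mono[of "Fq - {0}" "Nm ` ?U"] card_Fq by (simp add: Fq_def card_Diff_singleton)
  ultimately have "card (Nm ` ?U) = q - 1 \<and> card norm_one = q + 1"
    using card_norm_one_le two_le_q by (intro mult_eq_mult_le_le_imp_eq) simp_all
  then show ?thesis ..
qed

definition on_curve :: "'a \<Rightarrow> 'a \<Rightarrow> bool" where
  "on_curve x z \<longleftrightarrow> Tr z + Nm x = 0"

lemma aff_pt_in_hermitian_curve: "on_curve x z \<Longrightarrow> aff_pt x z \<in> hermitian_curve q"
  unfolding hermitian_curve_def aff_pt_def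
  by (rule CollectI, rule exI[of _ 1], rule exI[of _ x], rule exI[of _ z])
     (simp add: on_curve_def Tr_def Nm_def conj_eq_power power_Suc2 mult.commute)

lemma pt_infty_in_hermitian_curve: "pt_infty \<in> hermitian_curve q"
  unfolding hermitian_curve_def pt_infty_def using two_le_q
  by (intro CollectI exI[of _ 0] exI[of _ 1]) (simp add: power_0_left)

lemma exists_on_curve: "\<exists>z. on_curve x z"
proof -
  have "- Nm x \<in> range Tr"
    by (simp add: range_Tr Fq_def conj_uminus)
  then obtain z where "Tr z = - Nm x"
    by auto
  then have "on_curve x z"
    by (simp add: on_curve_def)
  then show ?thesis ..
qed

lemma card_on_curve: "card {z. on_curve x z} = q"
proof -
  obtain z0 where "on_curve x z0"
    using exists_on_curve by blast
  then have "{z. on_curve x z} = {z. Tr z = Tr z0}"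
    by (simp add: on_curve_def add_eq_0_iff2)
  then show ?thesis
    by (simp add: Tr_fibre card_image inj_on_def card_trace_kernel)
qed

lemma exists_other_on_curve:
  assumes "on_curve x z"
  shows "\<exists>z'. z' \<noteq> z \<and> on_curve x z'"
proof (rule ccontr)
  assume "\<not> ?thesis"
  then have "{z. on_curve x z} \<subseteq> {z}"
    by blast
  then have "card {z. on_curve x z} \<le> 1"
    using card_mono[of "{z}"] by simp
  then show False
    using card_on_curve[of x] two_le_q by simp
qed

lemma card_on_curve_over: "card {(x, z). x \<in> X \<and> on_curve x z} = card X * q"
proof -
  have "{(x, z). x \<in> X \<and> on_curve x z} = Sigma X (\<lambda>x. {z. on_curve x z})"
    by auto
  then show ?thesis
    by (simp add: card_on_curve)
qed

text \<open>Hence the line \<open>z = a + b x\<close> meets \<open>H\<^sub>q\<close> above the circle \<open>Nm (x + conj b) = Nm b - Tr a\<close>.\<close>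

lemma Tr_affine_add_Nm: "Tr (a + b * x) + Nm x = Tr a + Nm (x + conj b) - Nm b"
  by (simp add: Tr_def Nm_def conj_add conj_mult algebra_simps)

text \<open>The line \<open>z = z\<^sub>0 + Nm x\<^sub>0 - conj x\<^sub>0 * x\<close>, i.e. the circle above degenerates to \<open>x = x\<^sub>0\<close>.\<close>

definition tangent :: "'a \<Rightarrow> 'a \<Rightarrow> 'a vec3" where
  "tangent x0 z0 = (- (z0 + Nm x0), conj x0, 1)"

lemma tangent_nonzero: "tangent x0 z0 \<noteq> (0, 0, 0)"
  by (simp add: tangent_def)

lemma dot3_tangent: "dot3 (tangent x0 z0) (1, x, z) = z - (z0 + Nm x0) + conj x0 * x"
  by (simp add: tangent_def dot3_def)

lemma tangent_meets_curve_once: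
  assumes "on_curve x0 z0" and "on_curve x z" and "dot3 (tangent x0 z0) (1, x, z) = 0"
  shows "x = x0 \<and> z = z0"
proof -
  have z: "z = (z0 + Nm x0) + (- conj x0) * x"
    using assms(3) by (simp add: dot3_tangent algebra_simps)
  have "Tr (z0 + Nm x0) = Nm x0"
    using assms(1) by (simp add: on_curve_def Tr_def conj_add algebra_simps)
  moreover have "Nm (- conj x0) = Nm x0"
    by (simp add: Nm_def conj_uminus mult.commute)
  ultimately have "Nm (x - x0) = 0"
    using assms(2) Tr_affine_add_Nm[of "z0 + Nm x0" "- conj x0" x]
    by (simp add: on_curve_def z conj_uminus)
  then show ?thesis
    using z by (simp add: Nm_def)
qed

lemma card_circle:
  assumes "w0 \<noteq> 0"
  shows "card {x. Nm (x + \<beta>) = Nm w0} = q + 1"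
proof -
  have "{x. Nm (x + \<beta>) = Nm w0} = (\<lambda>w. w - \<beta>) ` {w. Nm w = Nm w0}"
    by (force simp: algebra_simps)
  then have "card {x. Nm (x + \<beta>) = Nm w0} = card {w. Nm w = Nm w0}"
    by (simp add: card_image inj_on_def)
  also have "\<dots> = card norm_one"
    using assms by (simp add: Nm_fibre card_image inj_on_def)
  finally show ?thesis
    by (simp add: card_norm_one)
qed

lemma line_meets_curve_again:
  assumes on_line: "on_curve x0 (a + b * x0)" and secant: "Nm (x0 + conj b) \<noteq> 0"
    and "card ({x. Nm (x + conj b) = Nm (x0 + conj b)} \<inter> D) \<le> q - 1"
  shows "\<exists>x1. x1 \<noteq> x0 \<and> x1 \<notin> D \<and> on_curve x1 (a + b * x1)"
proof -
  let ?C = "{x. Nm (x + conj b) = Nm (x0 + conj b)}"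
  have "card ?C = q + 1"
    using secant by (simp add: card_circle)
  then have "\<not> card (?C - D) \<le> 1"
    using assms(3) card_Int_Diff[of ?C D, OF finite] two_le_q by linarith
  then obtain x1 where x1: "x1 \<in> ?C - D" "x1 \<noteq> x0"
    using card_le_Suc0_iff_eq[of "?C - D"] by auto
  have "Tr (a + b * x1) + Nm x1 = Tr (a + b * x0) + Nm x0"
    using x1(1) by (simp add: Tr_affine_add_Nm)
  with on_line x1 show ?thesis
    by (auto simp: on_curve_def)
qed

end

locale hermitian_semioval_data = hermitian_plane q conj
  for q and conj :: "'a::{finite,field} \<Rightarrow> 'a" +
  fixes A :: "('a \<times> 'a) set" and D :: "'a set" and with_infty :: bool
  assumes A_on_curve: "(x, z) \<in> A \<Longrightarrow> on_curve x z"
    and on_curve_outside_D: "x \<notin> D \<Longrightarrow> on_curve x z \<Longrightarrow> (x, z) \<in> A"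
    and A_column_not_singleton: "(x, z) \<in> A \<Longrightarrow> \<exists>z'. z' \<noteq> z \<and> (x, z') \<in> A"
    and card_circle_inter_D: "c \<noteq> 0 \<Longrightarrow> card ({x. Nm (x + \<beta>) = c} \<inter> D) \<le> q - 1"
    and with_infty_D: "with_infty \<Longrightarrow> D = {}"
begin

definition pts :: "'a vec3 set set" where
  "pts = (\<lambda>(x, z). aff_pt x z) ` A \<union> (if with_infty then {pt_infty} else {})"

lemma aff_pt_in_pts_iff [simp]: "aff_pt x z \<in> pts \<longleftrightarrow> (x, z) \<in> A"
  by (auto simp: pts_def)

lemma pts_cases:
  assumes "P \<in> pts"
  obtains x z where "(x, z) \<in> A" "P = aff_pt x z" | "with_infty" "P = pt_infty"
  using assms unfolding pts_def by (auto split: if_splits)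

lemma pts_subset_hermitian_curve: "pts \<subseteq> hermitian_curve q"
  using A_on_curve aff_pt_in_hermitian_curve pt_infty_in_hermitian_curve
  by (auto simp: pts_def)

lemma card_pts: "card pts = card A + (if with_infty then 1 else 0)"
proof -
  have "card ((\<lambda>(x, z). aff_pt x z) ` A) = card A"
    by (rule card_image) (auto simp: inj_on_def)
  moreover have "pt_infty \<notin> (\<lambda>(x, z). aff_pt x z) ` A"
    by auto
  ultimately show ?thesis
    by (simp add: pts_def)
qed

lemma aff_pt_tangent:
  assumes "(x0, z0) \<in> A"
  shows "pts \<inter> pg_line (tangent x0 z0) = {aff_pt x0 z0}"
proof -
  have "P = aff_pt x0 z0" if "P \<in> pts" "P \<in> pg_line (tangent x0 z0)" for P
    using that(1)
  proof (cases rule: pts_cases)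
    case (1 x z)
    then show ?thesis
      using that(2) tangent_meets_curve_once[OF A_on_curve[OF assms] A_on_curve[OF 1(1)]]
      by (simp add: aff_pt_in_pg_line_iff)
  next
    case 2
    then show ?thesis
      using that(2) by (simp add: pt_infty_in_pg_line_iff tangent_def dot3_def)
  qed
  moreover have "aff_pt x0 z0 \<in> pg_line (tangent x0 z0)"
    by (simp add: aff_pt_in_pg_line_iff dot3_tangent Nm_def mult.commute)
  ultimately show ?thesis
    using assms by auto
qed

lemma tangent_line_not_vertical:
  assumes P: "(x0, z0) \<in> A" and L: "pts \<inter> pg_line (u0, u1, 0) = {aff_pt x0 z0}"
  shows False
proof -
  obtain z' where "z' \<noteq> z0" "(x0, z') \<in> A"
    using A_column_not_singleton[OF P] by blast
  moreover have "aff_pt x0 z0 \<in> pg_line (u0, u1, 0)"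
    using L by blast
  ultimately have "aff_pt x0 z' \<in> pts \<inter> pg_line (u0, u1, 0)"
    by (simp add: aff_pt_in_pg_line_iff dot3_def)
  with L \<open>z' \<noteq> z0\<close> show False
    by simp
qed

lemma tangent_line_normalized:
  assumes P: "(x0, z0) \<in> A" and L: "pts \<inter> pg_line (c0, c1, 1) = {aff_pt x0 z0}"
  shows "(c0, c1, 1) = tangent x0 z0"
proof -
  have "dot3 (c0, c1, 1) (1, x, z) = z - (- c0 + - c1 * x)" for x z
    by (simp add: dot3_def algebra_simps)
  then have on_line: "aff_pt x z \<in> pg_line (c0, c1, 1) \<longleftrightarrow> z = - c0 + - c1 * x" for x z
    by (simp add: aff_pt_in_pg_line_iff)
  have "aff_pt x0 z0 \<in> pg_line (c0, c1, 1)"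
    using L by blast
  then have z0: "z0 = - c0 + - c1 * x0"
    by (simp only: on_line)
  have "Nm (x0 + conj (- c1)) = 0"
  proof (rule ccontr)
    assume "Nm (x0 + conj (- c1)) \<noteq> 0"
    moreover have "on_curve x0 (- c0 + - c1 * x0)"
      using A_on_curve[OF P] z0 by simp
    ultimately obtain x1 where "x1 \<noteq> x0" "x1 \<notin> D" "on_curve x1 (- c0 + - c1 * x1)"
      using line_meets_curve_again card_circle_inter_D by blast
    then have "aff_pt x1 (- c0 + - c1 * x1) \<in> pts \<inter> pg_line (c0, c1, 1)"
      using on_curve_outside_D on_line by simp
    with L \<open>x1 \<noteq> x0\<close> show False
      by simp
  qed
  then have "c1 = conj x0"
    by (simp add: conj_uminus)
  with z0 show ?thesis
    by (simp add: tangent_def Nm_def mult.commute)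
qed

lemma aff_pt_tangent_unique:
  assumes P: "(x0, z0) \<in> A" and L: "pts \<inter> pg_line u = {aff_pt x0 z0}"
  shows "pg_line u = pg_line (tangent x0 z0)"
proof -
  obtain u0 u1 u2 where u: "u = (u0, u1, u2)"
    by (cases u) auto
  have "u2 \<noteq> 0"
  proof
    assume "u2 = 0"
    with L show False
      using tangent_line_not_vertical[OF P, of u0 u1] by (simp add: u)
  qed
  then have "pg_line u = pg_line (u0 / u2, u1 / u2, 1)"
    unfolding u by (rule pg_line_normalize)
  with L show ?thesis
    using tangent_line_normalized[OF P] by simp
qed

lemma pt_infty_tangent:
  assumes "with_infty"
  shows "pts \<inter> pg_line (1, 0, 0) = {pt_infty}"
proof -
  have "P = pt_infty" if "P \<in> pts" "P \<in> pg_line (1, 0, 0)" for P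
    using that(1)
  proof (cases rule: pts_cases)
    case (1 x z)
    then show ?thesis
      using that(2) by (simp add: aff_pt_in_pg_line_iff dot3_def)
  qed
  moreover have "pt_infty \<in> pg_line (1, 0, 0)"
    by (simp add: pt_infty_in_pg_line_iff dot3_def)
  moreover have "pt_infty \<in> pts"
    unfolding pts_def using assms by simp
  ultimately show ?thesis
    by blast
qed

lemma pt_infty_tangent_unique:
  assumes "with_infty" and "u \<noteq> (0, 0, 0)" and L: "pts \<inter> pg_line u = {pt_infty}"
  shows "pg_line u = pg_line (1, 0, 0)"
proof -
  obtain u0 u1 u2 where u: "u = (u0, u1, u2)"
    by (cases u) auto
  have "pt_infty \<in> pg_line u"
    using L by blast
  then have "u2 = 0"
    by (simp add: pt_infty_in_pg_line_iff u dot3_def)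
  show ?thesis
  proof (cases "u1 = 0")
    case True
    with \<open>u2 = 0\<close> \<open>u \<noteq> (0, 0, 0)\<close> have "u0 \<noteq> 0" "u = smul3 u0 (1, 0, 0)"
      by (simp_all add: u smul3_def)
    then show ?thesis
      by (simp add: pg_line_smul3)
  next
    case False
    obtain z where "on_curve (- u0 / u1) z"
      using exists_on_curve by blast
    then have "(- u0 / u1, z) \<in> A"
      using on_curve_outside_D with_infty_D[OF \<open>with_infty\<close>] by simp
    then have "aff_pt (- u0 / u1) z \<in> pts \<inter> pg_line u"
      using \<open>u2 = 0\<close> False by (simp add: aff_pt_in_pg_line_iff u dot3_def)
    with L show ?thesis
      by simp
  qed
qed

lemma semioval_pts:
  assumes "A \<noteq> {} \<or> with_infty"
  shows "semioval pts"
  unfolding semioval_def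
proof (intro conjI ballI)
  show "pts \<noteq> {}"
    using assms by (auto simp: pts_def)
  show "pts \<subseteq> pg_points"
    by (auto simp: pts_def aff_pt_def pt_infty_def intro: proj_pt_in_pg_points)
next
  fix P
  assume "P \<in> pts"
  then show "\<exists>!l. l \<in> pg_lines \<and> pts \<inter> l = {P}"
  proof (cases rule: pts_cases)
    case (1 x0 z0)
    then show ?thesis
      using aff_pt_tangent aff_pt_tangent_unique tangent_nonzero
      by (intro unique_tangent_lineI[of "tangent x0 z0"]) auto
  next
    case 2
    then show ?thesis
      using pt_infty_tangent pt_infty_tangent_unique
      by (intro unique_tangent_lineI[of "(1, 0, 0)"]) auto
  qed
qed

end

context hermitian_plane
begin

lemma exists_not_in_Fq: "\<exists>e. e \<notin> Fq"
proof -
  have "card Fq < card (UNIV :: 'a set)"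
    using card_Fq card_UNIV_eq two_le_q by (simp add: power2_eq_square)
  then have "Fq \<noteq> UNIV"
    by auto
  then show ?thesis
    by blast
qed

definition coset_union :: "'a \<Rightarrow> 'a set \<Rightarrow> 'a set" where
  "coset_union e E = (\<lambda>(s, f). s * e + f) ` (E \<times> Fq)"

lemma card_coset_union:
  assumes "e \<notin> Fq" and "E \<subseteq> Fq"
  shows "card (coset_union e E) = card E * q"
proof -
  have "inj_on (\<lambda>(s, f). s * e + f) (E \<times> Fq)"
  proof (rule inj_onI, clarify)
    fix s1 f1 s2 f2
    assume "s1 \<in> E" "f1 \<in> Fq" "s2 \<in> E" "f2 \<in> Fq" and eq: "s1 * e + f1 = s2 * e + f2"
    show "s1 = s2 \<and> f1 = f2"
    proof (cases "s1 = s2")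
      case False
      with eq have "e = (f2 - f1) / (s1 - s2)"
        by (simp add: field_simps)
      moreover have "s1 \<in> Fq" "s2 \<in> Fq"
        using \<open>s1 \<in> E\<close> \<open>s2 \<in> E\<close> assms(2) by auto
      then have "(f2 - f1) / (s1 - s2) \<in> Fq"
        using \<open>f1 \<in> Fq\<close> \<open>f2 \<in> Fq\<close> by (simp add: Fq_def conj_diff conj_divide)
      ultimately show ?thesis
        using assms(1) by simp
    qed (use eq in simp)
  qed
  then show ?thesis
    by (simp add: coset_union_def card_image card_cartesian_product card_Fq)
qed

lemma Nm_add_Fq: "f \<in> Fq \<Longrightarrow> Nm (u + f) = f ^ 2 + f * Tr u + Nm u"
  by (simp add: Nm_def Tr_def Fq_def conj_add power2_eq_square algebra_simps)

lemma card_circle_inter_coset_union: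
  assumes "E \<subseteq> Fq"
  shows "card ({x. Nm (x + \<beta>) = c} \<inter> coset_union e E) \<le> 2 * card E"
proof -
  define R where "R s = {f. f ^ 2 = - Tr (s * e + \<beta>) * f + (c - Nm (s * e + \<beta>))}" for s
  have "{x. Nm (x + \<beta>) = c} \<inter> coset_union e E \<subseteq> (\<Union>s\<in>E. (\<lambda>f. s * e + f) ` R s)"
  proof
    fix x
    assume "x \<in> {x. Nm (x + \<beta>) = c} \<inter> coset_union e E"
    then obtain s f where sf: "s \<in> E" "f \<in> Fq" "x = s * e + f" "Nm (s * e + \<beta> + f) = c"
      by (auto simp: coset_union_def algebra_simps)
    then have "c = f ^ 2 + f * Tr (s * e + \<beta>) + Nm (s * e + \<beta>)"
      using Nm_add_Fq[of f "s * e + \<beta>"] by simp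
    then have "f \<in> R s"
      unfolding R_def by (simp add: algebra_simps)
    with sf show "x \<in> (\<Union>s\<in>E. (\<lambda>f. s * e + f) ` R s)"
      by blast
  qed
  then have "card ({x. Nm (x + \<beta>) = c} \<inter> coset_union e E)
      \<le> card (\<Union>s\<in>E. (\<lambda>f. s * e + f) ` R s)"
    by (rule card_mono[OF finite])
  also have "\<dots> \<le> (\<Sum>s\<in>E. card ((\<lambda>f. s * e + f) ` R s))"
    by (rule card_UN_le) simp
  also have "\<dots> \<le> (\<Sum>s\<in>E. 2)"
  proof (rule sum_mono)
    fix s
    have "card ((\<lambda>f. s * e + f) ` R s) \<le> card (R s)"
      by (rule card_image_le) simp
    also have "\<dots> \<le> 2"
      unfolding R_def by (rule card_roots_power_eq_affine) simp
    finally show "card ((\<lambda>f. s * e + f) ` R s) \<le> 2" .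
  qed
  finally show ?thesis
    by simp
qed

definition column :: "'a \<Rightarrow> ('a \<times> 'a) set" where
  "column x = {x} \<times> {z. on_curve x z}"

lemma card_column: "card (column x) = q"
  by (simp add: column_def card_cartesian_product card_on_curve)

lemma disjoint_columns: "x \<noteq> y \<Longrightarrow> column x \<inter> column y = {}"
  by (auto simp: column_def)

lemma hermitian_semioval_data_replace_columns:
  assumes "\<And>\<beta> c. c \<noteq> 0 \<Longrightarrow> card ({x. Nm (x + \<beta>) = c} \<inter> D) \<le> q - 1"
    and Z: "Z \<subseteq> (\<Union>x\<in>D. column x)"
    and Z_no_singleton: "\<forall>x\<in>D. card (Z \<inter> column x) \<noteq> 1"
  shows "hermitian_semioval_data q conj ({(x, z). x \<notin> D \<and> on_curve x z} \<union> Z) D False"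
proof unfold_locales
  let ?A = "{(x, z). x \<notin> D \<and> on_curve x z} \<union> Z"
  show A_on_curve: "on_curve x z" if "(x, z) \<in> ?A" for x z
    using that Z by (auto simp: column_def)
  show "(x, z) \<in> ?A" if "x \<notin> D" "on_curve x z" for x z
    using that by simp
  show "\<exists>z'. z' \<noteq> z \<and> (x, z') \<in> ?A" if "(x, z) \<in> ?A" for x z
  proof (cases "x \<in> D")
    case False
    then show ?thesis
      using exists_other_on_curve[OF A_on_curve[OF that]] by auto
  next
    case True
    with that Z have "(x, z) \<in> Z \<inter> column x"
      by (auto simp: column_def)
    moreover have "card (Z \<inter> column x) \<noteq> 1"
      using Z_no_singleton True by blast
    ultimately have "\<not> card (Z \<inter> column x) \<le> 1"
      by (metis card_0_eq empty_iff finite le_SucE One_nat_def le_zero_eq)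
    then have "\<exists>p\<in>Z \<inter> column x. \<exists>p'\<in>Z \<inter> column x. p \<noteq> p'"
      using card_le_Suc0_iff_eq[of "Z \<inter> column x"] by (simp only: finite One_nat_def) blast
    then obtain p where "p \<in> Z \<inter> column x" "p \<noteq> (x, z)"
      by blast
    then show ?thesis
      by (auto simp: column_def)
  qed
qed (use assms(1) in simp_all)

lemma exists_semioval_of_size:
  assumes "3 \<le> q" and "2 * t \<le> q - 1" and "n \<le> t * q * q" and "n \<noteq> 1"
  shows "\<exists>S :: 'a vec3 set set.
    S \<subseteq> hermitian_curve q \<and> semioval S \<and> card S = (q * q - t * q) * q + n"
proof -
  obtain e where e: "e \<notin> Fq"
    using exists_not_in_Fq by blast
  have "t \<le> card Fq"
    using assms(2) card_Fq by linarith
  then obtain E where E: "E \<subseteq> Fq" "card E = t"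
    by (rule obtain_subset_with_card_n)
  define D where "D = coset_union e E"
  have card_D: "card D = t * q"
    using card_coset_union[OF e E(1)] E(2) by (simp add: D_def)
  have "n \<le> card D * q"
    using assms(3) card_D by simp
  then have "\<exists>Z \<subseteq> (\<Union>x\<in>D. column x).
      card Z = n \<and> (\<forall>x\<in>D. card (Z \<inter> column x) \<noteq> 1)"
    using assms(1,4) card_column disjoint_columns
    by (intro exists_subset_no_singleton_blocks) simp_all
  then obtain Z where Z: "Z \<subseteq> (\<Union>x\<in>D. column x)" "card Z = n"
      "\<forall>x\<in>D. card (Z \<inter> column x) \<noteq> 1"
    by blast
  define A where "A = {(x, z). x \<notin> D \<and> on_curve x z} \<union> Z"
  have "card ({x. Nm (x + \<beta>) = c} \<inter> D) \<le> q - 1" for \<beta> c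
    using card_circle_inter_coset_union[OF E(1), of \<beta> c e] E(2) assms(2) by (simp add: D_def)
  then interpret hermitian_semioval_data q conj A D False
    unfolding A_def using Z(1,3) by (rule hermitian_semioval_data_replace_columns)
  have "card (- D) = q * q - t * q"
    using card_Diff_subset[of D UNIV] card_D card_UNIV_eq
    by (simp add: Compl_eq_Diff_UNIV power2_eq_square)
  moreover have "{(x, z). x \<notin> D \<and> on_curve x z} \<inter> Z = {}"
    using Z(1) by (auto simp: column_def)
  ultimately have "card A = (q * q - t * q) * q + n"
    using card_on_curve_over[of "- D"] Z(2) by (simp add: A_def card_Un_disjoint)
  moreover have "t * q < q * q"
    using assms(1,2) by simp
  ultimately have "A \<noteq> {}"
    using assms(1) by fastforce
  have "card pts = (q * q - t * q) * q + n"
    using card_pts \<open>card A = _\<close> by simp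
  moreover have "semioval pts"
    using \<open>A \<noteq> {}\<close> by (intro semioval_pts) simp
  ultimately show ?thesis
    using pts_subset_hermitian_curve by blast
qed

lemma exists_semioval_of_card:
  assumes "3 \<le> q" and "2 * t \<le> q - 1"
    and "(q * q - t * q) * q + 2 \<le> k" and "k \<le> q * q * q"
  shows "\<exists>S :: 'a vec3 set set. S \<subseteq> hermitian_curve q \<and> semioval S \<and> card S = k"
proof -
  define n where "n = k - (q * q - t * q) * q"
  have "t \<le> q"
    using assms(2) by linarith
  then have "t * q * q \<le> q * q * q"
    by (intro mult_le_mono1)
  then have "(q * q - t * q) * q + t * q * q = q * q * q"
    by (simp add: diff_mult_distrib)
  then have "k = (q * q - t * q) * q + n" "n \<le> t * q * q" "n \<noteq> 1"
    using assms(3,4) by (simp_all add: n_def)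
  then show ?thesis
    using exists_semioval_of_size[OF assms(1,2)] by simp
qed

lemma exists_semioval_of_size_hermitian:
  "\<exists>S :: 'a vec3 set set. S \<subseteq> hermitian_curve q \<and> semioval S \<and> card S = q * q * q + 1"
proof -
  interpret hermitian_semioval_data q conj "{(x, z). on_curve x z}" "{}" True
    by unfold_locales (simp_all add: exists_other_on_curve)
  have "card {(x, z). on_curve x z} = q * q * q"
    using card_on_curve_over[of UNIV] card_UNIV_eq by (simp add: power2_eq_square)
  then have "card pts = q * q * q + 1"
    using card_pts by simp
  moreover have "semioval pts"
    using semioval_pts by simp
  ultimately show ?thesis
    using pts_subset_hermitian_curve by blast
qed

end

lemma semioval_size_lower_bound:
  fixes q k :: nat
  assumes "3 \<le> q"
    and "odd q \<Longrightarrow> real k \<ge> (real q ^ 3 + 2 * real q ^ 2 - real q + 2) / 2"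
    and "even q \<Longrightarrow> real k \<ge> (real q ^ 3 + 3 * real q ^ 2 - 2 * real q + 2) / 2"
  shows "(q * q - (q - 1) div 2 * q) * q + 2 \<le> k"
proof -
  define t where "t = (q - 1) div 2"
  have "t \<le> q"
    using div_le_dividend[of "q - 1" 2] by (simp add: t_def)
  then have "t * q \<le> q * q"
    by (rule mult_le_mono1)
  then have size: "real ((q * q - t * q) * q + 2) = (real q - real t) * real q ^ 2 + 2"
    by (simp add: of_nat_diff algebra_simps power2_eq_square)
  have "(real q - real t) * real q ^ 2 + 2 \<le> real k"
  proof (cases "odd q")
    case True
    then have "2 * t + 1 = q"
      unfolding t_def by presburger
    then have t: "real t = (real q - 1) / 2"
      by (simp flip: of_nat_add of_nat_mult)
    have "(real q - real t) * real q ^ 2 = (real q ^ 3 + real q ^ 2) / 2"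
      unfolding t by (simp add: field_simps power2_eq_square power3_eq_cube)
    moreover have "0 \<le> (real q - 2) * (real q + 1)"
      using assms(1) by simp
    ultimately show ?thesis
      using assms(2)[OF True] by (simp add: field_simps power2_eq_square power3_eq_cube)
  next
    case False
    then have "2 * t + 2 = q"
      using assms(1) unfolding t_def by presburger
    then have t: "real t = (real q - 2) / 2"
      by (simp flip: of_nat_add of_nat_mult)
    have "(real q - real t) * real q ^ 2 = (real q ^ 3 + 2 * real q ^ 2) / 2"
      unfolding t by (simp add: field_simps power2_eq_square power3_eq_cube)
    moreover have "2 \<le> real q * (real q - 2)"
      using assms(1) mult_mono[of 3 "real q" 1 "real q - 2"] by simp
    ultimately show ?thesis
      using assms(3) False by (simp add: field_simps power2_eq_square power3_eq_cube)
  qed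
  then show ?thesis
    unfolding t_def[symmetric] using size by linarith
qed

theorem mainTheorem5:
  fixes q k :: nat
  assumes "primepow q" and "q > 2"
    and "card (UNIV :: 'a::{finite, field} set) = q ^ 2"
    and "k \<le> q ^ 3 + 1"
    and "odd q \<Longrightarrow> real k \<ge> (real q ^ 3 + 2 * real q ^ 2 - real q + 2) / 2"
    and "even q \<Longrightarrow> real k \<ge> (real q ^ 3 + 3 * real q ^ 2 - 2 * real q + 2) / 2"
  shows "\<exists>S :: 'a vec3 set set. S \<subseteq> hermitian_curve q \<and> semioval S \<and> card S = k"
proof -
  interpret hermitian_plane q "\<lambda>x::'a. x ^ q"
    using assms(1,3) by unfold_locales simp_all
  show ?thesis
  proof (cases "k = q ^ 3 + 1")
    case True
    then show ?thesis
      using exists_semioval_of_size_hermitian by (simp add: power3_eq_cube)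
  next
    case False
    with assms(2,4-6) show ?thesis
      using exists_semioval_of_card[of "(q - 1) div 2" k] semioval_size_lower_bound[of q k]
      by (simp add: power3_eq_cube)
  qed
qed

end
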